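(* Let $n\ge 1$, $\lambda>0$, and let $\sigma_\lambda:\mathbb{R}^n\to\mathbb{R}^n$ be the softmax map $\sigma_\lambda(\mathbf{x})_i=\exp(\lambda x_i)/\sum_{j=1}^n\exp(\lambda x_j)$. Then for every $p\in[1,\infty]$: (a) for every $\mathbf{x}\in\mathbb{R}^n$, $\|J_{\sigma_1}(\mathbf{x})\|_p\le \tfrac12$, where $J_{\sigma_1}(\mathbf{x})$ is the Jacobian matrix of $\sigma_1$ at $\mathbf{x}$; (b) for all $\mathbf{x},\mathbf{y}\in\mathbb{R}^n$, $\|\sigma_\lambda(\mathbf{x})-\sigma_\lambda(\mathbf{y})\|_p\le \tfrac{\lambda}{2}\|\mathbf{x}-\mathbf{y}\|_p$.
   Context: For $p\in[1,\infty)$, $\|\mathbf{x}\|_p=(\sum_i|x_i|^p)^{1/p}$ and $\|\mathbf{x}\|_\infty=\max_i|x_i|$. For a matrix $A\in\mathbb{R}^{n\times n}$, $\|A\|_p=\sup_{\mathbf{v}\ne 0}\|A\mathbf{v}\|_p/\|\mathbf{v}\|_p$ denotes the operator norm induced by the vector $\ell_p$ norm. *)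

theory Defs
  imports "HOL-Analysis.Analysis"
begin

text \<open>Vectors in R^n are modelled as real^'n with 'n a finite index type.
  The exponent p ranges over [1,\<infinity>], modelled as an extended real p \<ge> 1.\<close>

definition lp_norm :: "ereal \<Rightarrow> real^'n \<Rightarrow> real" where
  "lp_norm p x =
     (if p = \<infinity> then Max (range (\<lambda>i. \<bar>x $ i\<bar>))
      else (\<Sum>i\<in>UNIV. \<bar>x $ i\<bar> powr real_of_ereal p) powr (1 / real_of_ereal p))"

definition lp_opnorm :: "ereal \<Rightarrow> real^'n^'n \<Rightarrow> real" where
  "lp_opnorm p A = (SUP v\<in>{v. v \<noteq> 0}. lp_norm p (A *v v) / lp_norm p v)"

definition softmax :: "real \<Rightarrow> real^'n \<Rightarrow> real^'n" where
  "softmax lam x = (\<chi> i. exp (lam * x $ i) / (\<Sum>j\<in>UNIV. exp (lam * x $ j)))"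

end

theory Submission
  imports Defs
begin

(* The Jacobian of softmax at x is diag s - s s^T, where s = softmax 1 x is a probability
   vector. Its i-th absolute row sum, and by symmetry its i-th column sum, is
   2 s_i (1 - s_i) <= 1/2, so by the Schur test (Jensen's inequality along each row) its
   l_p operator norm is at most 1/2 for every p. The Lipschitz bound follows from the mean
   value theorem for t |-> <w, softmax 1 (x + t (y - x))>, where w is a norming functional
   of softmax 1 y - softmax 1 x for the l_p norm; the factor lam comes from
   softmax lam x = softmax 1 (lam x). *)

lemma convex_on_powr_nonneg:
  fixes r :: real
  assumes r: "r \<ge> 1"
  shows "convex_on {0..} (\<lambda>x. x powr r)"
proof (rule convex_onI)
  fix t x y :: real
  assume t: "0 < t" "t < 1" and xy: "x \<in> {0..}" "y \<in> {0..}"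
  show "((1 - t) *\<^sub>R x + t *\<^sub>R y) powr r \<le> (1 - t) * x powr r + t * y powr r"
  proof (cases "x = 0 \<or> y = 0")
    case False
    then show ?thesis
      using convex_onD[OF powr_convex[OF r], of t x y] t xy by auto
  next
    case True
    have "(a * z) powr r \<le> a * z powr r" if "0 \<le> a" "a \<le> 1" "0 \<le> z" for a z :: real
    proof -
      have "a powr r \<le> a"
        using that r powr_mono'[of 1 r a] by simp
      then show ?thesis
        using that by (simp add: powr_mult mult_right_mono)
    qed
    from this[of "1 - t" x] this[of t y] show ?thesis
      using True t xy by auto
  qed
qed simp

lemma sum_mult_powr_le:
  fixes c y :: "'a \<Rightarrow> real" and r :: real
  assumes S: "finite S" and r: "r \<ge> 1"
    and c: "\<And>j. j \<in> S \<Longrightarrow> 0 \<le> c j" and y: "\<And>j. j \<in> S \<Longrightarrow> 0 \<le> y j"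
  shows "(\<Sum>j\<in>S. c j * y j) powr r \<le> (\<Sum>j\<in>S. c j) powr (r - 1) * (\<Sum>j\<in>S. c j * y j powr r)"
proof (cases "(\<Sum>j\<in>S. c j) = 0")
  case True
  then have "\<forall>j\<in>S. c j = 0"
    using sum_nonneg_eq_0_iff[OF S] c by blast
  then show ?thesis by simp
next
  case False
  define C where "C = (\<Sum>j\<in>S. c j)"
  have C: "C > 0"
    using False c unfolding C_def by (metis order_le_neq_trans sum_nonneg)
  have "(\<Sum>j\<in>S. (c j / C) *\<^sub>R y j) powr r \<le> (\<Sum>j\<in>S. (c j / C) * y j powr r)"
    using False c y C
    by (intro convex_on_sum[OF S _ convex_on_powr_nonneg[OF r]])
       (auto simp: C_def simp flip: sum_divide_distrib)
  then have "(\<Sum>j\<in>S. c j * y j) powr r / C powr r \<le> (\<Sum>j\<in>S. c j * y j powr r) / C"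
    using C c y by (simp add: powr_divide sum_nonneg flip: sum_divide_distrib)
  then have "(\<Sum>j\<in>S. c j * y j) powr r \<le> C powr r / C * (\<Sum>j\<in>S. c j * y j powr r)"
    using C by (simp add: field_simps)
  then show ?thesis
    using C by (simp add: C_def powr_diff)
qed

lemma Holder_sum_powr:
  fixes u v :: "'a \<Rightarrow> real" and r :: real
  assumes S: "finite S" and r: "r \<ge> 1"
  shows "(\<Sum>i\<in>S. \<bar>u i\<bar> powr (r - 1) * \<bar>v i\<bar>)
     \<le> (\<Sum>i\<in>S. \<bar>u i\<bar> powr r) powr ((r - 1) / r) * (\<Sum>i\<in>S. \<bar>v i\<bar> powr r) powr (1 / r)"
proof -
  define c where "c i = \<bar>u i\<bar> powr r" for i
  define y where "y i = (if u i = 0 then 0 else \<bar>v i\<bar> / \<bar>u i\<bar>)" for i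
  define H where "H = (\<Sum>i\<in>S. \<bar>u i\<bar> powr (r - 1) * \<bar>v i\<bar>)"
  define U where "U = (\<Sum>i\<in>S. \<bar>u i\<bar> powr r)"
  define V where "V = (\<Sum>i\<in>S. \<bar>v i\<bar> powr r)"
  have cy: "c i * y i = \<bar>u i\<bar> powr (r - 1) * \<bar>v i\<bar>" for i
    by (cases "u i = 0") (simp_all add: c_def y_def powr_diff)
  have cyr: "c i * y i powr r \<le> \<bar>v i\<bar> powr r" for i
    by (cases "u i = 0") (simp_all add: c_def y_def powr_divide)
  have H: "H \<ge> 0"
    unfolding H_def by (simp add: sum_nonneg)
  have "H powr r = (\<Sum>i\<in>S. c i * y i) powr r"
    by (simp add: H_def cy)
  also have "\<dots> \<le> (\<Sum>i\<in>S. c i) powr (r - 1) * (\<Sum>i\<in>S. c i * y i powr r)"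
    using S r by (intro sum_mult_powr_le) (auto simp: c_def y_def)
  also have "\<dots> \<le> U powr (r - 1) * V"
    unfolding U_def V_def c_def[symmetric] by (intro mult_left_mono sum_mono cyr) auto
  finally have "(H powr r) powr (1 / r) \<le> (U powr (r - 1) * V) powr (1 / r)"
    using r H by (intro powr_mono2) auto
  moreover have "(H powr r) powr (1 / r) = H"
    using r H by (simp add: powr_powr)
  moreover have "(U powr (r - 1) * V) powr (1 / r) = U powr ((r - 1) / r) * V powr (1 / r)"
    by (simp add: U_def V_def powr_mult powr_powr sum_nonneg)
  ultimately show ?thesis
    by (simp add: H_def U_def V_def)
qed

lemma lp_norm_nonneg: "0 \<le> lp_norm p v"
proof (cases "p = \<infinity>")
  case True
  have "0 \<le> \<bar>v $ undefined\<bar>"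
    by simp
  also have "\<dots> \<le> Max (range (\<lambda>i. \<bar>v $ i\<bar>))"
    by (rule Max_ge) auto
  finally show ?thesis
    using True by (simp add: lp_norm_def)
qed (simp add: lp_norm_def)

lemma lp_norm_scaleR:
  fixes v :: "real^'n"
  assumes c: "0 \<le> c" and p: "1 \<le> p"
  shows "lp_norm p (c *\<^sub>R v) = c * lp_norm p v"
proof (cases p)
  case (real r)
  then have r: "r \<ge> 1"
    using p by simp
  have "(\<Sum>i\<in>UNIV. \<bar>(c *\<^sub>R v) $ i\<bar> powr r) = c powr r * (\<Sum>i\<in>UNIV. \<bar>v $ i\<bar> powr r)"
    using c by (simp add: abs_mult powr_mult sum_distrib_left)
  moreover have "(c powr r * (\<Sum>i\<in>UNIV. \<bar>v $ i\<bar> powr r)) powr (1 / r)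
      = c * (\<Sum>i\<in>UNIV. \<bar>v $ i\<bar> powr r) powr (1 / r)"
    using c r by (simp add: powr_mult powr_powr sum_nonneg)
  ultimately show ?thesis
    using real by (simp add: lp_norm_def)
next
  case PInf
  have "mono ((*) c)"
    using c by (auto intro: monoI mult_left_mono)
  then have "Max ((*) c ` range (\<lambda>i. \<bar>v $ i\<bar>)) = c * Max (range (\<lambda>i. \<bar>v $ i\<bar>))"
    by (intro mono_Max_commute[symmetric]) auto
  then show ?thesis
    using PInf c by (simp add: lp_norm_def abs_mult image_image)
qed (use p in simp)

lemma lp_norm_norming_functional_finite:
  fixes u :: "real^'n"
  assumes r: "r \<ge> 1"
  obtains w where "w \<bullet> u = lp_norm (ereal r) u" and "\<And>v. w \<bullet> v \<le> lp_norm (ereal r) v"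
proof (cases "u = 0")
  case True
  show ?thesis
    by (rule that[of 0]) (use True r in \<open>simp_all add: lp_norm_def lp_norm_nonneg\<close>)
next
  case False
  define U where "U = (\<Sum>i\<in>UNIV. \<bar>u $ i\<bar> powr r)"
  obtain i where "u $ i \<noteq> 0"
    using False by (auto simp: vec_eq_iff)
  then have "U > 0"
    unfolding U_def by (intro sum_pos2[of _ i]) auto
  define K where "K = U powr ((r - 1) / r)"
  have K: "K > 0"
    using \<open>U > 0\<close> by (simp add: K_def)
  \<comment> \<open>the equality case of Hoelder's inequality\<close>
  define w where "w = (\<chi> i. sgn (u $ i) * \<bar>u $ i\<bar> powr (r - 1) / K)"
  have "w $ i * u $ i = \<bar>u $ i\<bar> powr r / K" for i
  proof (cases "u $ i = 0")
    case False
    have "w $ i * u $ i = (sgn (u $ i) * u $ i) * \<bar>u $ i\<bar> powr (r - 1) / K"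
      by (simp add: w_def)
    also have "\<dots> = \<bar>u $ i\<bar> powr r / K"
      using False by (simp add: mult.commute powr_diff flip: abs_sgn)
    finally show ?thesis .
  qed (simp add: w_def)
  then have "w \<bullet> u = U / K"
    by (simp add: inner_vec_def U_def sum_divide_distrib)
  also have "\<dots> = U powr (1 - (r - 1) / r)"
    using \<open>U > 0\<close> by (simp add: K_def powr_diff)
  also have "\<dots> = lp_norm (ereal r) u"
    using r by (simp add: lp_norm_def U_def field_simps)
  finally have "w \<bullet> u = lp_norm (ereal r) u" .
  moreover have "w \<bullet> v \<le> lp_norm (ereal r) v" for v
  proof -
    have "w \<bullet> v \<le> (\<Sum>i\<in>UNIV. \<bar>u $ i\<bar> powr (r - 1) * \<bar>v $ i\<bar>) / K"
      unfolding inner_vec_def sum_divide_distrib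
      using K by (intro sum_mono) (auto simp: w_def abs_mult abs_sgn_eq intro: abs_le_D1)
    also have "\<dots> \<le> K * (\<Sum>i\<in>UNIV. \<bar>v $ i\<bar> powr r) powr (1 / r) / K"
      using Holder_sum_powr[OF _ r, of UNIV "\<lambda>i. u $ i" "\<lambda>i. v $ i"] K
      by (intro divide_right_mono) (auto simp: K_def U_def)
    also have "\<dots> = lp_norm (ereal r) v"
      using K by (simp add: lp_norm_def)
    finally show ?thesis .
  qed
  ultimately show ?thesis
    using that by blast
qed

lemma lp_norm_norming_functional_infinity:
  fixes u :: "real^'n"
  obtains w where "w \<bullet> u = lp_norm \<infinity> u" and "\<And>v. w \<bullet> v \<le> lp_norm \<infinity> v"
proof -
  have "Max (range (\<lambda>i. \<bar>u $ i\<bar>)) \<in> range (\<lambda>i. \<bar>u $ i\<bar>)"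
    by (rule Max_in) auto
  then obtain k where k: "\<bar>u $ k\<bar> = Max (range (\<lambda>i. \<bar>u $ i\<bar>))"
    by (metis rangeE)
  define w where "w = (\<chi> i. if i = k then sgn (u $ k) else 0)"
  have w: "w \<bullet> v = sgn (u $ k) * v $ k" for v
  proof -
    have "w \<bullet> v = (\<Sum>i\<in>UNIV. if i = k then sgn (u $ k) * v $ k else 0)"
      unfolding inner_vec_def by (rule sum.cong) (auto simp: w_def)
    then show ?thesis
      by simp
  qed
  show ?thesis
  proof (rule that)
    show "w \<bullet> u = lp_norm \<infinity> u"
      using k by (simp add: w lp_norm_def mult.commute flip: abs_sgn)
    have "sgn (u $ k) * v $ k \<le> Max (range (\<lambda>i. \<bar>v $ i\<bar>))" for v
      by (rule order_trans[OF _ Max_ge[of _ "\<bar>v $ k\<bar>"]]) (auto simp: sgn_real_def)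
    then show "w \<bullet> v \<le> lp_norm \<infinity> v" for v
      by (simp add: w lp_norm_def)
  qed
qed

lemma lp_norm_norming_functional:
  fixes u :: "real^'n"
  assumes "1 \<le> p"
  obtains w where "w \<bullet> u = lp_norm p u" and "\<And>v. w \<bullet> v \<le> lp_norm p v"
proof (cases p)
  case (real r)
  then show ?thesis
    using assms that lp_norm_norming_functional_finite[of r u] by auto
next
  case PInf
  then show ?thesis
    using that lp_norm_norming_functional_infinity[of u] by auto
qed (use assms in simp)

lemma lp_norm_Lipschitz_of_derivative_bound:
  fixes f :: "real^'n \<Rightarrow> real^'m"
  assumes p: "1 \<le> p"
    and deriv: "\<And>z. (f has_derivative f' z) (at z)"
    and bound: "\<And>z v. lp_norm p (f' z v) \<le> B * lp_norm p v"
  shows "lp_norm p (f y - f x) \<le> B * lp_norm p (y - x)"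
proof -
  define d where "d = y - x"
  obtain w where w_eq: "w \<bullet> (f y - f x) = lp_norm p (f y - f x)"
    and w_le: "\<And>v. w \<bullet> v \<le> lp_norm p v"
    using lp_norm_norming_functional[OF p] by blast
  define g where "g t = w \<bullet> f (x + t *\<^sub>R d)" for t
  have "(g has_derivative (\<lambda>h. w \<bullet> f' (x + t *\<^sub>R d) (h *\<^sub>R d))) (at t within {0..1})" for t
  proof -
    have "((\<lambda>t. x + t *\<^sub>R d) has_derivative (\<lambda>h. h *\<^sub>R d)) (at t within {0..1})"
      by (auto intro!: derivative_eq_intros)
    from has_derivative_compose[OF this deriv] show ?thesis
      unfolding g_def by (intro has_derivative_inner_right)
  qed
  then obtain t where "g 1 - g 0 = w \<bullet> f' (x + t *\<^sub>R d) d"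
    using mvt_very_simple[of 0 1 g] by fastforce
  moreover have "g 1 - g 0 = lp_norm p (f y - f x)"
    by (simp add: g_def d_def inner_diff_right flip: w_eq)
  ultimately have "lp_norm p (f y - f x) = w \<bullet> f' (x + t *\<^sub>R d) d"
    by simp
  also have "\<dots> \<le> B * lp_norm p d"
    using w_le bound order_trans by blast
  finally show ?thesis
    by (simp add: d_def)
qed

lemma abs_matrix_vector_mult_le:
  fixes A :: "real^'n^'m"
  shows "\<bar>(A *v v) $ i\<bar> \<le> (\<Sum>j\<in>UNIV. \<bar>A $ i $ j\<bar> * \<bar>v $ j\<bar>)"
  unfolding matrix_vector_mult_def by (simp add: order_trans[OF sum_abs] abs_mult)

lemma sum_abs_matrix_vector_mult_powr_le:
  fixes A :: "real^'n^'m"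
  assumes r: "r \<ge> 1"
    and rows: "\<And>i. (\<Sum>j\<in>UNIV. \<bar>A $ i $ j\<bar>) \<le> c"
    and cols: "\<And>j. (\<Sum>i\<in>UNIV. \<bar>A $ i $ j\<bar>) \<le> c"
  shows "(\<Sum>i\<in>UNIV. \<bar>(A *v v) $ i\<bar> powr r) \<le> c powr r * (\<Sum>j\<in>UNIV. \<bar>v $ j\<bar> powr r)"
proof -
  have c: "c \<ge> 0"
    using rows[of undefined] by (meson order_trans sum_nonneg abs_ge_zero)
  have row: "\<bar>(A *v v) $ i\<bar> powr r \<le> c powr (r - 1) * (\<Sum>j\<in>UNIV. \<bar>A $ i $ j\<bar> * \<bar>v $ j\<bar> powr r)"
    for i
  proof -
    have "\<bar>(A *v v) $ i\<bar> powr r \<le> (\<Sum>j\<in>UNIV. \<bar>A $ i $ j\<bar> * \<bar>v $ j\<bar>) powr r"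
      using r by (intro powr_mono2 abs_matrix_vector_mult_le) auto
    also have "\<dots> \<le> (\<Sum>j\<in>UNIV. \<bar>A $ i $ j\<bar>) powr (r - 1) * (\<Sum>j\<in>UNIV. \<bar>A $ i $ j\<bar> * \<bar>v $ j\<bar> powr r)"
      using r by (intro sum_mult_powr_le) auto
    also have "\<dots> \<le> c powr (r - 1) * (\<Sum>j\<in>UNIV. \<bar>A $ i $ j\<bar> * \<bar>v $ j\<bar> powr r)"
      using rows[of i] r by (intro mult_right_mono powr_mono2) (auto simp: sum_nonneg)
    finally show ?thesis .
  qed
  have "(\<Sum>i\<in>UNIV. \<bar>(A *v v) $ i\<bar> powr r)
      \<le> (\<Sum>i\<in>UNIV. c powr (r - 1) * (\<Sum>j\<in>UNIV. \<bar>A $ i $ j\<bar> * \<bar>v $ j\<bar> powr r))"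
    by (rule sum_mono) (rule row)
  also have "\<dots> = c powr (r - 1) * (\<Sum>j\<in>UNIV. (\<Sum>i\<in>UNIV. \<bar>A $ i $ j\<bar>) * \<bar>v $ j\<bar> powr r)"
  proof -
    have "(\<Sum>i\<in>UNIV. \<Sum>j\<in>UNIV. \<bar>A $ i $ j\<bar> * \<bar>v $ j\<bar> powr r)
        = (\<Sum>j\<in>UNIV. \<Sum>i\<in>UNIV. \<bar>A $ i $ j\<bar> * \<bar>v $ j\<bar> powr r)"
      by (rule sum.swap)
    then show ?thesis
      by (simp only: sum_distrib_left[symmetric] sum_distrib_right)
  qed
  also have "\<dots> \<le> c powr (r - 1) * (\<Sum>j\<in>UNIV. c * \<bar>v $ j\<bar> powr r)"
    using cols by (intro mult_left_mono sum_mono mult_right_mono) auto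
  also have "\<dots> = c powr r * (\<Sum>j\<in>UNIV. \<bar>v $ j\<bar> powr r)"
    using c by (cases "c = 0") (simp_all add: powr_diff flip: sum_distrib_left)
  finally show ?thesis .
qed

lemma lp_norm_matrix_vector_mult_le:
  fixes A :: "real^'n^'m"
  assumes p: "1 \<le> p"
    and rows: "\<And>i. (\<Sum>j\<in>UNIV. \<bar>A $ i $ j\<bar>) \<le> c"
    and cols: "\<And>j. (\<Sum>i\<in>UNIV. \<bar>A $ i $ j\<bar>) \<le> c"
  shows "lp_norm p (A *v v) \<le> c * lp_norm p v"
proof (cases p)
  case PInf
  define M where "M = Max (range (\<lambda>j. \<bar>v $ j\<bar>))"
  have v: "\<bar>v $ j\<bar> \<le> M" for j
    unfolding M_def by (rule Max_ge) auto
  have "\<bar>(A *v v) $ i\<bar> \<le> c * M" for i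
  proof -
    have "\<bar>(A *v v) $ i\<bar> \<le> (\<Sum>j\<in>UNIV. \<bar>A $ i $ j\<bar> * M)"
      by (rule order_trans[OF abs_matrix_vector_mult_le sum_mono]) (simp add: v mult_left_mono)
    also have "\<dots> \<le> c * M"
      using rows[of i] v[of undefined] by (simp add: mult_right_mono flip: sum_distrib_right)
    finally show ?thesis .
  qed
  then show ?thesis
    using PInf by (simp add: lp_norm_def M_def)
next
  case (real r)
  then have r: "r \<ge> 1"
    using p by simp
  have c: "c \<ge> 0"
    using rows[of undefined] by (meson order_trans sum_nonneg abs_ge_zero)
  define V where "V = (\<Sum>j\<in>UNIV. \<bar>v $ j\<bar> powr r)"
  have "(\<Sum>i\<in>UNIV. \<bar>(A *v v) $ i\<bar> powr r) powr (1 / r) \<le> (c powr r * V) powr (1 / r)"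
    using sum_abs_matrix_vector_mult_powr_le[OF r rows cols] r
    by (intro powr_mono2) (auto simp: V_def sum_nonneg)
  also have "\<dots> = c * V powr (1 / r)"
    using r c by (simp add: V_def powr_mult powr_powr sum_nonneg)
  finally show ?thesis
    using real by (simp add: lp_norm_def V_def)
qed (use p in simp)

lemma lp_opnorm_le:
  fixes A :: "real^'n^'n"
  assumes "0 \<le> c" and "\<And>v. lp_norm p (A *v v) \<le> c * lp_norm p v"
  shows "lp_opnorm p A \<le> c"
  unfolding lp_opnorm_def
proof (rule cSUP_least)
  show "{v :: real^'n. v \<noteq> 0} \<noteq> {}"
    using axis_eq_0_iff[of undefined "1 :: real"] by (auto simp flip: ex_in_conv)
  show "lp_norm p (A *v v) / lp_norm p v \<le> c" for v
    using assms lp_norm_nonneg[of p v]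
    by (cases "lp_norm p v = 0") (simp_all add: divide_le_eq)
qed

definition softmax_jacobian :: "real^'n \<Rightarrow> real^'n^'n" where
  "softmax_jacobian s = (\<chi> i j. (if i = j then s $ i else 0) - s $ i * s $ j)"

lemma softmax_nonneg: "0 \<le> softmax lam x $ i"
  by (simp add: softmax_def sum_nonneg)

lemma sum_softmax: "(\<Sum>i\<in>UNIV. softmax lam x $ i) = 1"
proof -
  have "(\<Sum>j\<in>UNIV. exp (lam * x $ j)) > 0"
    by (simp add: sum_pos)
  then show ?thesis
    by (simp add: softmax_def flip: sum_divide_distrib)
qed

lemma softmax_scaleR: "softmax lam x = softmax 1 (lam *\<^sub>R x)"
  by (simp add: softmax_def)

lemma softmax_jacobian_mult_vector:
  "(softmax_jacobian s *v h) $ i = s $ i * (h $ i - (\<Sum>j\<in>UNIV. s $ j * h $ j))"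
proof -
  have "(softmax_jacobian s *v h) $ i
      = (\<Sum>j\<in>UNIV. (if i = j then s $ i * h $ j else 0)) - (\<Sum>j\<in>UNIV. s $ i * (s $ j * h $ j))"
    unfolding sum_subtractf[symmetric]
    by (auto simp: softmax_jacobian_def matrix_vector_mult_def algebra_simps intro: sum.cong)
  then show ?thesis
    by (simp add: right_diff_distrib flip: sum_distrib_left)
qed

lemma has_derivative_softmax:
  fixes x :: "real^'n"
  shows "(softmax 1 has_derivative (\<lambda>h. softmax_jacobian (softmax 1 x) *v h)) (at x)"
proof -
  define S where "S = (\<Sum>j\<in>UNIV. exp (x $ j))"
  have S: "S > 0"
    unfolding S_def by (simp add: sum_pos)
  have nth: "((\<lambda>y. y $ k) has_derivative (\<lambda>h. h $ k)) (at x)" for k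
    by (rule bounded_linear_imp_has_derivative) (rule bounded_linear_vec_nth)
  have "((\<lambda>y. exp (y $ k) / (\<Sum>j\<in>UNIV. exp (y $ j))) has_derivative
      (\<lambda>h. (exp (x $ k) * h $ k * S - exp (x $ k) * (\<Sum>j\<in>UNIV. exp (x $ j) * h $ j)) / (S * S))) (at x)"
    for k
    using S unfolding S_def
    by (auto intro!: derivative_eq_intros nth simp: field_simps)
  moreover have "(exp (x $ k) * h $ k * S - exp (x $ k) * (\<Sum>j\<in>UNIV. exp (x $ j) * h $ j)) / (S * S)
      = (softmax_jacobian (softmax 1 x) *v h) $ k" for h k
  proof -
    have "(softmax_jacobian (softmax 1 x) *v h) $ k
        = exp (x $ k) / S * (h $ k - (\<Sum>j\<in>UNIV. exp (x $ j) * h $ j) / S)"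
      by (simp add: softmax_jacobian_mult_vector softmax_def S_def sum_divide_distrib)
    then show ?thesis
      using S by (simp add: field_simps)
  qed
  ultimately show ?thesis
    by (subst has_derivative_componentwise_within)
       (simp add: Basis_vec_def inner_axis softmax_def)
qed

lemma jacobian_softmax: "jacobian (softmax 1) (at x) = softmax_jacobian (softmax 1 x)"
  unfolding jacobian_def frechet_derivative_at[OF has_derivative_softmax, symmetric]
  by simp

lemma sum_abs_softmax_jacobian_row:
  fixes s :: "real^'n"
  assumes nonneg: "\<And>i. 0 \<le> s $ i" and sum1: "(\<Sum>i\<in>UNIV. s $ i) = 1"
  shows "(\<Sum>j\<in>UNIV. \<bar>softmax_jacobian s $ i $ j\<bar>) = 2 * s $ i * (1 - s $ i)"
proof -
  have "s $ i \<le> 1"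
    using member_le_sum[of i UNIV "\<lambda>i. s $ i"] nonneg sum1 by auto
  then have "s $ i * s $ i \<le> s $ i"
    using nonneg[of i] by (simp add: mult_right_le_one_le)
  then have "\<bar>softmax_jacobian s $ i $ j\<bar> = s $ i * s $ j + (if i = j then s $ i * (1 - 2 * s $ i) else 0)"
    for j
    using nonneg[of i] nonneg[of j]
    by (auto simp: softmax_jacobian_def abs_mult algebra_simps)
  then show ?thesis
    using sum1 by (simp add: sum.distrib algebra_simps flip: sum_distrib_left sum_distrib_right)
qed

lemma lp_norm_softmax_jacobian_le:
  fixes s :: "real^'n"
  assumes "\<And>i. 0 \<le> s $ i" and "(\<Sum>i\<in>UNIV. s $ i) = 1" and "1 \<le> p"
  shows "lp_norm p (softmax_jacobian s *v v) \<le> 1 / 2 * lp_norm p v"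
proof (rule lp_norm_matrix_vector_mult_le)
  have row: "(\<Sum>j\<in>UNIV. \<bar>softmax_jacobian s $ i $ j\<bar>) \<le> 1 / 2" for i
    using sum_abs_softmax_jacobian_row[OF assms(1,2), of i] sum_squares_ge_zero[of "2 * s $ i - 1" 0]
    by (simp add: algebra_simps power2_eq_square)
  then show "(\<Sum>j\<in>UNIV. \<bar>softmax_jacobian s $ i $ j\<bar>) \<le> 1 / 2" for i .
  have "softmax_jacobian s $ i $ j = softmax_jacobian s $ j $ i" for i j
    by (simp add: softmax_jacobian_def mult.commute)
  then show "(\<Sum>i\<in>UNIV. \<bar>softmax_jacobian s $ i $ j\<bar>) \<le> 1 / 2" for j
    using row[of j] by simp
qed (rule assms(3))

theorem theorem1:
  fixes lam :: real and p :: ereal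
  assumes "lam > 0" and "1 \<le> p"
  shows "(\<forall>x :: real^'n. lp_opnorm p (jacobian (softmax 1) (at x)) \<le> 1 / 2)
       \<and> (\<forall>x y :: real^'n. lp_norm p (softmax lam x - softmax lam y) \<le> lam / 2 * lp_norm p (x - y))"
proof -
  note Jacobian_bound = lp_norm_softmax_jacobian_le[OF softmax_nonneg sum_softmax assms(2)]
  have "lp_opnorm p (jacobian (softmax 1) (at x)) \<le> 1 / 2" for x :: "real^'n"
    unfolding jacobian_softmax by (intro lp_opnorm_le Jacobian_bound) simp
  moreover have "lp_norm p (softmax lam x - softmax lam y) \<le> lam / 2 * lp_norm p (x - y)"
    for x y :: "real^'n"
  proof -
    have "lp_norm p (softmax lam x - softmax lam y)
        \<le> 1 / 2 * lp_norm p (lam *\<^sub>R x - lam *\<^sub>R y)"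
      unfolding softmax_scaleR[of lam]
      by (rule lp_norm_Lipschitz_of_derivative_bound[OF assms(2) has_derivative_softmax Jacobian_bound])
    also have "lam *\<^sub>R x - lam *\<^sub>R y = lam *\<^sub>R (x - y)"
      by (rule scaleR_diff_right[symmetric])
    also have "lp_norm p (lam *\<^sub>R (x - y)) = lam * lp_norm p (x - y)"
      using assms by (intro lp_norm_scaleR) auto
    finally show ?thesis
      by simp
  qed
  ultimately show ?thesis
    by blast
qed

end
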